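(* Consider the one-hop wireless network model described in the context, where the channel powers $\gamma_{i,j}$ are i.i.d. with the generalized Pareto distribution with p.d.f. $f(x)=\frac{\alpha}{(1+x)^{\alpha+1}}$ and c.d.f. $F(x)=1-\frac{1}{(1+x)^{\alpha}}$ for $x\ge0$, where $\alpha>2$. Then, with high probability, the achievable throughput (obtained by activating the source-destination pairs with the largest direct-link powers and silencing the rest) satisfies $T=\Omega\left(n^{1/(1+\alpha)}\right)$.
   Context: Network model: $n$ sources $S_1,\dots,S_n$ and $n$ destinations $D_1,\dots,D_n$; $S_i$ wishes to communicate with $D_i$ in one hop. The channel power from $S_i$ to $D_j$ is $\gamma_{i,j}\ge0$; all $\gamma_{i,j}$ are i.i.d. with mean $\mu$. A subset $\mathbb{S}$ of sources is active, each with power $1$; $SINR_i=\frac{\gamma_{i,i}}{N_0+\sum_{S_k\in\mathbb{S},k\ne i}\gamma_{k,i}}$ for $S_i\in\mathbb{S}$ (and $0$ otherwise), with noise variance $N_0\ge0$; $D_i$ succeeds if $SINR_i>\beta$ for a fixed constant $\beta>0$. The throughput $T$ is the number of successful destinations. "With high probability" means with probability tending to $1$ as $n\to\infty$. *)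

theory Defs
  imports "HOL-Probability.Probability"
begin

definition pareto_dist :: "real \<Rightarrow> real measure" where
  "pareto_dist \<alpha> = density lborel
     (\<lambda>x. ennreal (indicator {0..} x * (\<alpha> / (1 + x) powr (\<alpha> + 1))))"

text \<open>Probability space of an n-by-n i.i.d. channel matrix; gamma (i,j) is the
  power from source i to destination j, indices in {..<n}.\<close>
definition channel_space :: "real \<Rightarrow> nat \<Rightarrow> (nat \<times> nat \<Rightarrow> real) measure" where
  "channel_space \<alpha> n = (\<Pi>\<^sub>M p \<in> {..<n} \<times> {..<n}. pareto_dist \<alpha>)"

text \<open>Interference at destination i from the active set S (unit powers).\<close>
definition interference :: "(nat \<times> nat \<Rightarrow> real) \<Rightarrow> nat set \<Rightarrow> nat \<Rightarrow> real" where
  "interference \<gamma> S i = (\<Sum>k\<in>S - {i}. \<gamma> (k, i))"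

text \<open>D_i succeeds iff S_i is active and SINR_i > beta, i.e.
  gamma(i,i) / (N0 + interference) > beta; written multiplicatively so that a
  zero denominator (N0 = 0, no interferers) means infinite SINR.\<close>
definition succeeds :: "real \<Rightarrow> real \<Rightarrow> (nat \<times> nat \<Rightarrow> real) \<Rightarrow> nat set \<Rightarrow> nat \<Rightarrow> bool" where
  "succeeds N0 \<beta> \<gamma> S i \<longleftrightarrow> i \<in> S \<and> \<gamma> (i, i) > \<beta> * (N0 + interference \<gamma> S i)"

definition throughput :: "real \<Rightarrow> real \<Rightarrow> (nat \<times> nat \<Rightarrow> real) \<Rightarrow> nat set \<Rightarrow> nat" where
  "throughput N0 \<beta> \<gamma> S = card {i \<in> S. succeeds N0 \<beta> \<gamma> S i}"

definition top_set :: "nat \<Rightarrow> nat \<Rightarrow> (nat \<times> nat \<Rightarrow> real) \<Rightarrow> nat set \<Rightarrow> bool" where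
  "top_set n k \<gamma> S \<longleftrightarrow> S \<subseteq> {..<n} \<and> card S = k \<and>
     (\<forall>i\<in>S. \<forall>j\<in>{..<n} - S. \<gamma> (j, j) \<le> \<gamma> (i, i))"

end

theory Submission
  imports Defs "HOL-Real_Asymp.Real_Asymp"
begin

(* Fix a threshold t = L n^(1/(1+\<alpha>)) and call pair i strong if \<gamma>(i,i) \<ge> t. A pair is strong
   with probability p = (1+t)^(-\<alpha>), so q = np is of order n^(1/(1+\<alpha>)); by Chebyshev the number
   of strong pairs lies between q/2 and 3q/2 with high probability, and then a top set of size
   \<lfloor>q/2\<rfloor> consists of strong pairs. The total interference among the strong pairs is \<mu> times the
   number of ordered strong pairs plus a centred fluctuation of second moment at most (np)\<^sup>2\<sigma>\<^sup>2,
   finite because \<alpha> > 2; so with high probability it is at most (1 + 9\<mu>/4) q\<^sup>2. An active strong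
   pair fails only if its interference reaches \<theta> = 8(1 + 9\<mu>/4) q, which is below t/\<beta> - N0 once
   L is large, hence at most q/8 of the active pairs fail and the throughput is at least q/4. *)

section \<open>The generalized Pareto distribution\<close>

definition pareto_density :: "real \<Rightarrow> real \<Rightarrow> real" where
  "pareto_density \<alpha> x = indicator {0..} x * (\<alpha> / (1 + x) powr (\<alpha> + 1))"

definition pareto_mean :: "real \<Rightarrow> real" where
  "pareto_mean \<alpha> = (\<integral>v. v \<partial>pareto_dist \<alpha>)"

definition pareto_variance :: "real \<Rightarrow> real" where
  "pareto_variance \<alpha> = (\<integral>v. (v - pareto_mean \<alpha>)\<^sup>2 \<partial>pareto_dist \<alpha>)"

lemma borel_measurable_pareto_density [measurable]: "pareto_density \<alpha> \<in> borel_measurable borel"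
  unfolding pareto_density_def by measurable

lemma pareto_dist_eq_density: "pareto_dist \<alpha> = density lborel (\<lambda>x. ennreal (pareto_density \<alpha> x))"
  unfolding pareto_dist_def pareto_density_def ..

lemma space_pareto_dist [simp]: "space (pareto_dist \<alpha>) = UNIV"
  by (simp add: pareto_dist_def)

lemma sets_pareto_dist [simp, measurable_cong]: "sets (pareto_dist \<alpha>) = sets borel"
  by (simp add: pareto_dist_def)

lemma nn_integral_pareto_tail:
  assumes "\<alpha> > 0" and "t \<ge> 0"
  shows "(\<integral>\<^sup>+x. ennreal (pareto_density \<alpha> x) * indicator {t..} x \<partial>lborel) = ennreal ((1 + t) powr (-\<alpha>))"
proof -
  have "(\<integral>\<^sup>+x. ennreal (pareto_density \<alpha> x) * indicator {t..} x \<partial>lborel)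
      = (\<integral>\<^sup>+x. ennreal (\<alpha> / (1 + x) powr (\<alpha> + 1)) * indicator {t..} x \<partial>lborel)"
    using \<open>t \<ge> 0\<close> by (intro nn_integral_cong) (auto simp: pareto_density_def indicator_def)
  also have "\<dots> = 0 - (- ((1 + t) powr (-\<alpha>)))"
  proof (rule nn_integral_FTC_atLeast)
    fix x assume "t \<le> x"
    then have "((\<lambda>x. - ((1 + x) powr (-\<alpha>))) has_real_derivative \<alpha> * (1 + x) powr (-\<alpha> - 1)) (at x)"
      using \<open>t \<ge> 0\<close> by (auto intro!: derivative_eq_intros)
    moreover have "-\<alpha> - 1 = - (\<alpha> + 1)" by simp
    ultimately show "((\<lambda>x. - ((1 + x) powr (-\<alpha>))) has_real_derivative \<alpha> / (1 + x) powr (\<alpha> + 1)) (at x)"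
      by (simp only: powr_minus_divide) simp
    show "0 \<le> \<alpha> / (1 + x) powr (\<alpha> + 1)" using \<open>\<alpha> > 0\<close> by simp
  next
    show "((\<lambda>x. - ((1 + x) powr (-\<alpha>))) \<longlongrightarrow> 0) at_top" using \<open>\<alpha> > 0\<close> by real_asymp
  qed measurable
  finally show ?thesis by simp
qed

lemma emeasure_pareto_dist_atLeast:
  assumes "\<alpha> > 0" and "t \<ge> 0"
  shows "emeasure (pareto_dist \<alpha>) {t..} = ennreal ((1 + t) powr (-\<alpha>))"
  unfolding pareto_dist_eq_density
  by (subst emeasure_density) (auto simp: nn_integral_pareto_tail[OF assms])

lemma prob_space_pareto_dist:
  assumes "\<alpha> > 0" shows "prob_space (pareto_dist \<alpha>)"
proof
  have "emeasure (pareto_dist \<alpha>) UNIV = emeasure (pareto_dist \<alpha>) {0..}"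
    unfolding pareto_dist_eq_density
    by (auto simp: emeasure_density pareto_density_def indicator_def intro!: nn_integral_cong)
  then show "emeasure (pareto_dist \<alpha>) (space (pareto_dist \<alpha>)) = 1"
    using emeasure_pareto_dist_atLeast[OF assms, of 0] by simp
qed

lemma AE_pareto_dist_nonneg: "AE x in pareto_dist \<alpha>. x \<ge> 0"
  unfolding pareto_dist_eq_density
  by (subst AE_density) (auto simp: pareto_density_def indicator_def)

lemma pareto_mean_nonneg: "pareto_mean \<alpha> \<ge> 0"
  unfolding pareto_mean_def using AE_pareto_dist_nonneg by (rule integral_nonneg_AE)

lemma pareto_variance_nonneg: "pareto_variance \<alpha> \<ge> 0"
  unfolding pareto_variance_def by simp

lemma nn_integral_pareto_second_moment_majorant:
  assumes "\<alpha> > 2"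
  shows "(\<integral>\<^sup>+x. ennreal (\<alpha> / (1 + x) powr (\<alpha> - 1)) * indicator {0..} x \<partial>lborel) = ennreal (\<alpha> / (\<alpha> - 2))"
proof -
  have "(\<integral>\<^sup>+x. ennreal (\<alpha> / (1 + x) powr (\<alpha> - 1)) * indicator {0..} x \<partial>lborel)
      = 0 - (- (\<alpha> / (\<alpha> - 2)) * (1 + 0) powr (2 - \<alpha>))"
  proof (rule nn_integral_FTC_atLeast)
    fix x :: real assume "0 \<le> x"
    then have "((\<lambda>x. - (\<alpha> / (\<alpha> - 2)) * (1 + x) powr (2 - \<alpha>)) has_real_derivative
        - (\<alpha> / (\<alpha> - 2)) * ((2 - \<alpha>) * (1 + x) powr (2 - \<alpha> - 1))) (at x)"
      using \<open>\<alpha> > 2\<close> by (auto intro!: derivative_eq_intros)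
    moreover have "- (\<alpha> / (\<alpha> - 2)) * (2 - \<alpha>) = \<alpha>" "2 - \<alpha> - 1 = - (\<alpha> - 1)"
      using \<open>\<alpha> > 2\<close> by (simp_all add: field_simps)
    ultimately show "((\<lambda>x. - (\<alpha> / (\<alpha> - 2)) * (1 + x) powr (2 - \<alpha>)) has_real_derivative \<alpha> / (1 + x) powr (\<alpha> - 1)) (at x)"
      by (simp only: mult.assoc[symmetric] powr_minus_divide) simp
    show "0 \<le> \<alpha> / (1 + x) powr (\<alpha> - 1)" using \<open>\<alpha> > 2\<close> by simp
  next
    show "((\<lambda>x. - (\<alpha> / (\<alpha> - 2)) * (1 + x) powr (2 - \<alpha>)) \<longlongrightarrow> 0) at_top"
      using \<open>\<alpha> > 2\<close> by real_asymp
  qed measurable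
  then show ?thesis by simp
qed

lemma integrable_pareto_dist_power2:
  assumes "\<alpha> > 2"
  shows "integrable (pareto_dist \<alpha>) (\<lambda>x. x\<^sup>2)"
proof -
  have "integrable lborel (\<lambda>x. pareto_density \<alpha> x * x\<^sup>2)"
  proof (rule integrableI_nonneg)
    show "AE x in lborel. 0 \<le> pareto_density \<alpha> x * x\<^sup>2"
      using assms by (auto simp: pareto_density_def)
    \<comment> \<open>the majorant is integrable exactly because \<open>\<alpha> > 2\<close>\<close>
    have "(\<integral>\<^sup>+x. ennreal (pareto_density \<alpha> x * x\<^sup>2) \<partial>lborel)
        \<le> (\<integral>\<^sup>+x. ennreal (\<alpha> / (1 + x) powr (\<alpha> - 1)) * indicator {0..} x \<partial>lborel)"
    proof (intro nn_integral_mono)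
      fix x :: real
      show "ennreal (pareto_density \<alpha> x * x\<^sup>2) \<le> ennreal (\<alpha> / (1 + x) powr (\<alpha> - 1)) * indicator {0..} x"
      proof (cases "x \<ge> 0")
        case True
        have "(1 + x) powr (\<alpha> + 1) = (1 + x) powr (\<alpha> - 1) * (1 + x)\<^sup>2"
          using True by (simp add: add.commute flip: powr_add powr_numeral)
        moreover have "x\<^sup>2 \<le> (1 + x)\<^sup>2" using True by (intro power_mono) auto
        ultimately have "\<alpha> / (1 + x) powr (\<alpha> + 1) * x\<^sup>2 \<le> \<alpha> / (1 + x) powr (\<alpha> - 1)"
          using True assms by (simp add: divide_simps mult.commute)
        then show ?thesis using True by (simp add: pareto_density_def ennreal_leI)
      qed (simp add: pareto_density_def)
    qed
    also have "\<dots> < \<infinity>" using nn_integral_pareto_second_moment_majorant[OF assms] by simp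
    finally show "(\<integral>\<^sup>+x. ennreal (pareto_density \<alpha> x * x\<^sup>2) \<partial>lborel) < \<infinity>" .
  qed measurable
  then show ?thesis
    unfolding pareto_dist_eq_density using assms
    by (subst integrable_density) (auto simp: pareto_density_def)
qed

section \<open>Throughput of a fixed channel realization\<close>

definition strong_pairs :: "nat \<Rightarrow> real \<Rightarrow> (nat \<times> nat \<Rightarrow> real) \<Rightarrow> nat set" where
  "strong_pairs n t \<gamma> = {i\<in>{..<n}. t \<le> \<gamma> (i, i)}"

definition mutual_interference :: "(nat \<times> nat \<Rightarrow> real) \<Rightarrow> nat set \<Rightarrow> real" where
  "mutual_interference \<gamma> D = (\<Sum>i\<in>D. interference \<gamma> D i)"

lemma top_set_subset_strong_pairs:
  assumes top: "top_set n k \<gamma> S" and k: "k \<le> card (strong_pairs n t \<gamma>)"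
  shows "S \<subseteq> strong_pairs n t \<gamma>"
proof
  fix i assume "i \<in> S"
  have S: "S \<subseteq> {..<n}" "card S = k" and dom: "\<And>j. j \<in> {..<n} - S \<Longrightarrow> \<gamma> (j, j) \<le> \<gamma> (i, i)"
    using top \<open>i \<in> S\<close> unfolding top_set_def by auto
  have "finite S" using S(1) finite_subset by blast
  show "i \<in> strong_pairs n t \<gamma>"
  proof (rule ccontr)
    assume i_weak: "i \<notin> strong_pairs n t \<gamma>"
    then have "strong_pairs n t \<gamma> \<subseteq> S - {i}"
      using dom \<open>i \<in> S\<close> S(1) by (force simp: strong_pairs_def)
    then have "card (strong_pairs n t \<gamma>) < card S"
      using \<open>finite S\<close> \<open>i \<in> S\<close> by (meson card_Diff1_less card_mono finite_Diff order.strict_trans1)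
    then show False using k S(2) by simp
  qed
qed

lemma card_ge_threshold_le_sum_div:
  fixes f :: "'a \<Rightarrow> real"
  assumes "finite A" and "\<theta> > 0" and "\<And>i. i \<in> A \<Longrightarrow> f i \<ge> 0"
  shows "real (card {i\<in>A. \<theta> \<le> f i}) \<le> (\<Sum>i\<in>A. f i) / \<theta>"
proof -
  have "real (card {i\<in>A. \<theta> \<le> f i}) * \<theta> = (\<Sum>i\<in>{i\<in>A. \<theta> \<le> f i}. \<theta>)" by simp
  also have "\<dots> \<le> (\<Sum>i\<in>{i\<in>A. \<theta> \<le> f i}. f i)" by (rule sum_mono) simp
  also have "\<dots> \<le> (\<Sum>i\<in>A. f i)" using assms by (intro sum_mono2) auto
  finally show ?thesis using \<open>\<theta> > 0\<close> by (simp add: field_simps)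
qed

lemma throughput_ge_card_minus_mutual_interference:
  fixes \<gamma> :: "nat \<times> nat \<Rightarrow> real"
  assumes nonneg: "\<And>i j. i \<in> D \<Longrightarrow> j \<in> D \<Longrightarrow> \<gamma> (i, j) \<ge> 0"
    and "finite D" and "S \<subseteq> D" and strong: "\<And>i. i \<in> D \<Longrightarrow> t \<le> \<gamma> (i, i)"
    and "\<theta> > 0" and "\<beta> > 0" and "\<beta> * (N0 + \<theta>) \<le> t"
  shows "real (card S) - mutual_interference \<gamma> D / \<theta> \<le> real (throughput N0 \<beta> \<gamma> S)"
proof -
  define F where "F = {i\<in>S. \<not> succeeds N0 \<beta> \<gamma> S i}"
  have "finite S" using \<open>finite D\<close> \<open>S \<subseteq> D\<close> finite_subset by blast
  have "S = {i\<in>S. succeeds N0 \<beta> \<gamma> S i} \<union> F" "{i\<in>S. succeeds N0 \<beta> \<gamma> S i} \<inter> F = {}"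
    unfolding F_def by auto
  then have card_S: "card S = throughput N0 \<beta> \<gamma> S + card F"
    unfolding throughput_def using \<open>finite S\<close> by (metis card_Un_disjoint finite_Un)
  have "F \<subseteq> {i\<in>D. \<theta> \<le> interference \<gamma> D i}"
  proof
    fix i assume "i \<in> F"
    then have "i \<in> S" "i \<in> D" "\<not> \<gamma> (i, i) > \<beta> * (N0 + interference \<gamma> S i)"
      using \<open>S \<subseteq> D\<close> unfolding F_def succeeds_def by auto
    then have "\<beta> * (N0 + \<theta>) \<le> \<beta> * (N0 + interference \<gamma> S i)"
      using strong[of i] \<open>\<beta> * (N0 + \<theta>) \<le> t\<close> by linarith
    then have "\<theta> \<le> interference \<gamma> S i" using \<open>\<beta> > 0\<close> by simp
    also have "\<dots> \<le> interference \<gamma> D i"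
      unfolding interference_def using \<open>finite D\<close> \<open>S \<subseteq> D\<close> \<open>i \<in> D\<close> nonneg
      by (intro sum_mono2) auto
    finally show "i \<in> {i\<in>D. \<theta> \<le> interference \<gamma> D i}" using \<open>i \<in> D\<close> by simp
  qed
  then have "real (card F) \<le> real (card {i\<in>D. \<theta> \<le> interference \<gamma> D i})"
    using \<open>finite D\<close> by (simp add: card_mono)
  also have "\<dots> \<le> mutual_interference \<gamma> D / \<theta>"
    unfolding mutual_interference_def using \<open>finite D\<close> \<open>\<theta> > 0\<close> nonneg
    by (intro card_ge_threshold_le_sum_div) (auto simp: interference_def intro!: sum_nonneg)
  finally show ?thesis using card_S by simp
qed

lemma mutual_interference_eq_sum_pairs:
  assumes "finite D"
  shows "mutual_interference \<gamma> D = (\<Sum>(k, i)\<in>{(k, i). k \<in> D \<and> i \<in> D \<and> k \<noteq> i}. \<gamma> (k, i))"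
proof -
  have "mutual_interference \<gamma> D = (\<Sum>(i, k)\<in>(SIGMA i:D. D - {i}). \<gamma> (k, i))"
    unfolding mutual_interference_def interference_def using assms by (simp add: sum.Sigma)
  also have "\<dots> = (\<Sum>(k, i)\<in>{(k, i). k \<in> D \<and> i \<in> D \<and> k \<noteq> i}. \<gamma> (k, i))"
    by (rule sum.reindex_bij_witness[of _ prod.swap prod.swap]) auto
  finally show ?thesis .
qed

section \<open>Strong pairs of a random Pareto channel\<close>

lemma prob_space_channel_space: "\<alpha> > 0 \<Longrightarrow> prob_space (channel_space \<alpha> n)"
  unfolding channel_space_def by (intro prob_space_PiM prob_space_pareto_dist)

locale pareto_channel =
  fixes \<alpha> :: real and n :: nat and t :: real
  assumes alpha_gt_2: "\<alpha> > 2" and threshold_nonneg: "t \<ge> 0"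
begin

abbreviation "P \<equiv> pareto_dist \<alpha>"
abbreviation "M \<equiv> channel_space \<alpha> n"
abbreviation "I \<equiv> {..<n} \<times> {..<n}"
abbreviation "\<mu> \<equiv> pareto_mean \<alpha>"
abbreviation "\<sigma>2 \<equiv> pareto_variance \<alpha>"

sublocale P: prob_space P
  using alpha_gt_2 by (intro prob_space_pareto_dist) simp

sublocale product_sigma_finite "\<lambda>_ :: nat \<times> nat. P" ..

sublocale M: prob_space M
  using alpha_gt_2 by (intro prob_space_channel_space) simp

lemma integral_channel_prod:
  fixes h :: "nat \<times> nat \<Rightarrow> real \<Rightarrow> real"
  assumes "\<And>q. q \<in> I \<Longrightarrow> integrable P (h q)"
  shows "(\<integral>\<gamma>. (\<Prod>q\<in>I. h q (\<gamma> q)) \<partial>M) = (\<Prod>q\<in>I. \<integral>v. h q v \<partial>P)"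
  unfolding channel_space_def by (rule product_integral_prod[OF _ assms]) simp

lemma integrable_channel_prod:
  fixes h :: "nat \<times> nat \<Rightarrow> real \<Rightarrow> real"
  assumes "\<And>q. q \<in> I \<Longrightarrow> integrable P (h q)"
  shows "integrable M (\<lambda>\<gamma>. \<Prod>q\<in>I. h q (\<gamma> q))"
  unfolding channel_space_def by (rule product_integrable_prod[OF _ assms]) simp

lemma AE_channel_nonneg: "AE \<gamma> in M. \<forall>z\<in>I. \<gamma> z \<ge> 0"
proof (rule AE_finite_allI)
  show "AE \<gamma> in M. \<gamma> z \<ge> 0" if "z \<in> I" for z
    using that unfolding channel_space_def
    by (intro AE_PiM_component[where P="\<lambda>v. v \<ge> 0"] P.prob_space_axioms AE_pareto_dist_nonneg)
qed simp

lemma measurable_channel_coordinate [measurable]: "(\<lambda>\<gamma>. \<gamma> z) \<in> borel_measurable M"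
proof (cases "z \<in> I")
  case True
  then show ?thesis unfolding channel_space_def by measurable
next
  case False
  then have "\<gamma> z = undefined" if "\<gamma> \<in> space M" for \<gamma>
    using that False unfolding channel_space_def by (cases z) (auto simp: space_PiM PiE_def extensional_def)
  then show ?thesis using measurable_cong[of M "\<lambda>\<gamma>. \<gamma> z" "\<lambda>_. undefined" borel] by simp
qed

definition p :: real where "p = (1 + t) powr (-\<alpha>)"

definition strong_ind :: "real \<Rightarrow> real" where "strong_ind v = indicator {t..} v"

lemma p_bounds: "0 \<le> p" "p \<le> 1"
proof -
  have "(1 + t) powr \<alpha> \<ge> 1" using alpha_gt_2 threshold_nonneg by (intro ge_one_powr_ge_zero) auto
  then show "0 \<le> p" "p \<le> 1" unfolding p_def by (auto simp: powr_minus inverse_le_1_iff)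
qed

lemma strong_ind_cases: "strong_ind v = 0 \<or> strong_ind v = 1"
  by (simp add: strong_ind_def indicator_def)

lemma strong_ind_idem: "strong_ind v * strong_ind v = strong_ind v"
  by (simp add: strong_ind_def indicator_def)

lemma borel_measurable_strong_ind [measurable]: "strong_ind \<in> borel_measurable borel"
  unfolding strong_ind_def by measurable

lemma borel_measurable_P: "f \<in> borel_measurable borel \<Longrightarrow> f \<in> borel_measurable P"
  by (subst measurable_cong_sets[OF sets_pareto_dist refl])

lemma prob_P_UNIV [simp]: "P.prob UNIV = 1"
  using P.prob_space by simp

lemma integrable_P_power2: "integrable P (\<lambda>v. v\<^sup>2)"
  using alpha_gt_2 by (rule integrable_pareto_dist_power2)

lemma integrable_P_id: "integrable P (\<lambda>v. v)"
  by (rule P.square_integrable_imp_integrable[OF borel_measurable_P integrable_P_power2]) simp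

lemma integrable_P_centered_power2: "integrable P (\<lambda>v. (v - c)\<^sup>2)"
  by (simp add: power2_diff integrable_P_power2 integrable_P_id)

lemma integrable_P_strong_ind: "integrable P strong_ind"
  by (rule P.integrable_const_bound[where B=1]) (auto simp: strong_ind_def intro: borel_measurable_P)

lemma integral_P_strong_ind: "(\<integral>v. strong_ind v \<partial>P) = p"
proof -
  have "(\<integral>v. strong_ind v \<partial>P) = P.prob {t..}" unfolding strong_ind_def by simp
  also have "\<dots> = p"
    using emeasure_pareto_dist_atLeast[of \<alpha> t] alpha_gt_2 threshold_nonneg
    by (simp add: p_def P.emeasure_eq_measure)
  finally show ?thesis .
qed

lemma integral_P_centered: "(\<integral>v. v - \<mu> \<partial>P) = 0"
  using integrable_P_id by (simp add: pareto_mean_def)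

lemma integral_P_strong_ind_variance: "(\<integral>v. (strong_ind v - p) * (strong_ind v - p) \<partial>P) = p - p * p"
proof -
  have "(\<lambda>v. (strong_ind v - p) * (strong_ind v - p)) = (\<lambda>v. (1 - 2 * p) * strong_ind v + p * p)"
    using strong_ind_cases by (force simp: algebra_simps)
  then show ?thesis using integrable_P_strong_ind by (simp add: integral_P_strong_ind algebra_simps)
qed

definition is_strong :: "nat \<Rightarrow> (nat \<times> nat \<Rightarrow> real) \<Rightarrow> real" where
  "is_strong a \<gamma> = strong_ind (\<gamma> (a, a))"

definition num_strong :: "(nat \<times> nat \<Rightarrow> real) \<Rightarrow> real" where
  "num_strong \<gamma> = (\<Sum>a<n. is_strong a \<gamma>)"

lemma borel_measurable_is_strong [measurable]: "is_strong a \<in> borel_measurable M"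
  unfolding is_strong_def by measurable

lemma borel_measurable_num_strong [measurable]: "num_strong \<in> borel_measurable M"
  unfolding num_strong_def by measurable

lemma is_strong_iff: "is_strong a \<gamma> = (if t \<le> \<gamma> (a, a) then 1 else 0)"
  by (simp add: is_strong_def strong_ind_def indicator_def)

lemma num_strong_eq_card: "num_strong \<gamma> = real (card (strong_pairs n t \<gamma>))"
proof -
  have "strong_pairs n t \<gamma> = {..<n} \<inter> {a. t \<le> \<gamma> (a, a)}"
    by (auto simp: strong_pairs_def)
  then show ?thesis by (simp add: num_strong_def is_strong_iff sum.If_cases)
qed

lemma abs_strong_ind_dev_le: "\<bar>strong_ind v - p\<bar> \<le> 1 + p"
  using strong_ind_cases[of v] p_bounds by auto

lemma integral_strong_dev_product:
  assumes "a < n" and "b < n"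
  shows "(\<integral>\<gamma>. (is_strong a \<gamma> - p) * (is_strong b \<gamma> - p) \<partial>M) = (if a = b then p - p * p else 0)"
proof -
  define h where "h q v = (if q = (a, a) then strong_ind v - p else 1) * (if q = (b, b) then strong_ind v - p else 1)"
    for q v
  have h_bound: "\<bar>h q v\<bar> \<le> (1 + p) * (1 + p)" for q v
  proof -
    have "\<bar>if c then strong_ind v - p else 1\<bar> \<le> 1 + p" for c
      using abs_strong_ind_dev_le p_bounds by auto
    then show ?thesis unfolding h_def abs_mult using p_bounds by (intro mult_mono) auto
  qed
  have "h q \<in> borel_measurable P" for q
    unfolding h_def by (intro borel_measurable_P) measurable
  then have "integrable P (h q)" for q
    using h_bound by (intro P.integrable_const_bound[where B="(1 + p) * (1 + p)"]) auto
  moreover have "(is_strong a \<gamma> - p) * (is_strong b \<gamma> - p) = (\<Prod>q\<in>I. h q (\<gamma> q))" for \<gamma>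
    unfolding h_def prod.distrib using assms by (simp add: is_strong_def)
  ultimately have "(\<integral>\<gamma>. (is_strong a \<gamma> - p) * (is_strong b \<gamma> - p) \<partial>M) = (\<Prod>q\<in>I. \<integral>v. h q v \<partial>P)"
    by (simp add: integral_channel_prod)
  also have "\<dots> = (if a = b then p - p * p else 0)"
  proof (cases "a = b")
    case True
    then have "(\<integral>v. h q v \<partial>P) = (if q = (a, a) then p - p * p else 1)" for q
      unfolding h_def using integral_P_strong_ind_variance by auto
    then show ?thesis using True assms by simp
  next
    case False
    then have "(\<integral>v. h (a, a) v \<partial>P) = 0"
      unfolding h_def using integrable_P_strong_ind by (simp add: integral_P_strong_ind)
    then show ?thesis using False assms by (intro trans[OF prod_zero]) auto
  qed
  finally show ?thesis .
qed

lemma integrable_strong_dev_product: "integrable M (\<lambda>\<gamma>. (is_strong a \<gamma> - p) * (is_strong b \<gamma> - p))"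
proof (rule M.integrable_const_bound[where B="(1 + p) * (1 + p)"])
  have "\<bar>is_strong c \<gamma> - p\<bar> \<le> 1 + p" for c \<gamma>
    unfolding is_strong_def by (rule abs_strong_ind_dev_le)
  then show "AE \<gamma> in M. norm ((is_strong a \<gamma> - p) * (is_strong b \<gamma> - p)) \<le> (1 + p) * (1 + p)"
    unfolding real_norm_def abs_mult using p_bounds by (intro AE_I2 mult_mono) auto
qed measurable

lemma num_strong_dev_square:
  "(num_strong \<gamma> - n * p)\<^sup>2 = (\<Sum>a<n. \<Sum>b<n. (is_strong a \<gamma> - p) * (is_strong b \<gamma> - p))"
proof -
  have "num_strong \<gamma> - n * p = (\<Sum>a<n. is_strong a \<gamma> - p)"
    unfolding num_strong_def by (simp add: sum_subtractf)
  then show ?thesis by (simp add: power2_eq_square sum_product)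
qed

lemma integrable_num_strong_dev_square: "integrable M (\<lambda>\<gamma>. (num_strong \<gamma> - n * p)\<^sup>2)"
  unfolding num_strong_dev_square by (intro Bochner_Integration.integrable_sum integrable_strong_dev_product)

lemma integral_num_strong_dev_square_le: "(\<integral>\<gamma>. (num_strong \<gamma> - n * p)\<^sup>2 \<partial>M) \<le> n * p"
proof -
  have "(\<integral>\<gamma>. (num_strong \<gamma> - n * p)\<^sup>2 \<partial>M)
      = (\<Sum>a<n. \<Sum>b<n. \<integral>\<gamma>. (is_strong a \<gamma> - p) * (is_strong b \<gamma> - p) \<partial>M)"
    unfolding num_strong_dev_square
    by (simp add: integrable_strong_dev_product integrable_sum)
  also have "\<dots> = (\<Sum>a<n. p - p * p)"
    by (intro sum.cong refl) (simp add: integral_strong_dev_product if_distrib cong: if_cong)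
  also have "\<dots> \<le> n * p" using p_bounds by (simp add: mult_left_mono)
  finally show ?thesis .
qed

definition off_diag :: "(nat \<times> nat) set" where
  "off_diag = {(a, b). a < n \<and> b < n \<and> a \<noteq> b}"

definition fluct_term :: "nat \<times> nat \<Rightarrow> (nat \<times> nat \<Rightarrow> real) \<Rightarrow> real" where
  "fluct_term ab \<gamma> = is_strong (fst ab) \<gamma> * is_strong (snd ab) \<gamma> * (\<gamma> ab - \<mu>)"

definition fluct :: "(nat \<times> nat \<Rightarrow> real) \<Rightarrow> real" where
  "fluct \<gamma> = (\<Sum>ab\<in>off_diag. fluct_term ab \<gamma>)"

lemma finite_off_diag: "finite off_diag"
  by (rule finite_subset[of _ I]) (auto simp: off_diag_def)

lemma card_off_diag_le: "card off_diag \<le> n * n"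
  by (rule order.trans[OF card_mono[of I]]) (auto simp: off_diag_def card_cartesian_product)

lemma borel_measurable_fluct [measurable]: "fluct \<in> borel_measurable M"
  unfolding fluct_def fluct_term_def by measurable

text \<open>The factor contributed by coordinate \<open>q\<close> to \<open>fluct_term (a, b) \<gamma> * fluct_term (c, d) \<gamma>\<close>,
  so that this product becomes a product of functions of independent coordinates.\<close>

definition cross_factor :: "nat \<Rightarrow> nat \<Rightarrow> nat \<Rightarrow> nat \<Rightarrow> nat \<times> nat \<Rightarrow> real \<Rightarrow> real" where
  "cross_factor a b c d q v =
     (if q = (a, a) then strong_ind v else 1) * (if q = (b, b) then strong_ind v else 1) *
     (if q = (c, c) then strong_ind v else 1) * (if q = (d, d) then strong_ind v else 1) *
     ((if q = (a, b) then v - \<mu> else 1) * (if q = (c, d) then v - \<mu> else 1))"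

lemma fluct_term_product:
  assumes "(a, b) \<in> off_diag" and "(c, d) \<in> off_diag"
  shows "fluct_term (a, b) \<gamma> * fluct_term (c, d) \<gamma> = (\<Prod>q\<in>I. cross_factor a b c d q (\<gamma> q))"
  using assms unfolding cross_factor_def prod.distrib fluct_term_def is_strong_def off_diag_def
  by (simp add: algebra_simps)

lemma integrable_cross_factor: "integrable P (cross_factor a b c d q)"
proof (rule Bochner_Integration.integrable_bound)
  show "integrable P (\<lambda>v. 1 + (v - \<mu>)\<^sup>2)" using integrable_P_centered_power2 by simp
  show "cross_factor a b c d q \<in> borel_measurable P"
    unfolding cross_factor_def by (intro borel_measurable_P) measurable
  have "\<bar>cross_factor a b c d q v\<bar> \<le> 1 + (v - \<mu>)\<^sup>2" for v
  proof -
    have ind: "\<bar>if b' then strong_ind v else 1\<bar> \<le> 1" for b'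
      using strong_ind_cases[of v] by auto
    have "\<bar>w\<bar> \<le> 1 + w\<^sup>2" for w :: real
      using zero_le_power2[of "\<bar>w\<bar> - 1"] by (simp add: power2_diff)
    then have dev: "\<bar>(if b1 then v - \<mu> else 1) * (if b2 then v - \<mu> else 1)\<bar> \<le> 1 + (v - \<mu>)\<^sup>2" for b1 b2
      by (cases b1; cases b2) (auto simp: abs_mult simp flip: power2_eq_square)
    let ?s = "\<lambda>b'. if b' then strong_ind v else 1" and ?d = "\<lambda>b'. if b' then v - \<mu> else 1"
    have "\<bar>?s (q = (a, a)) * ?s (q = (b, b)) * ?s (q = (c, c)) * ?s (q = (d, d))\<bar> \<le> 1"
      unfolding abs_mult by (intro mult_le_one ind abs_ge_zero)
    then have "\<bar>cross_factor a b c d q v\<bar> \<le> 1 * (1 + (v - \<mu>)\<^sup>2)"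
      unfolding cross_factor_def abs_mult[of _ "?d (q = (a, b)) * ?d (q = (c, d))"]
      by (rule mult_mono[OF _ dev zero_le_one abs_ge_zero])
    then show ?thesis by simp
  qed
  then show "AE v in P. norm (cross_factor a b c d q v) \<le> norm (1 + (v - \<mu>)\<^sup>2)" by simp
qed

lemma integrable_fluct_term_product:
  assumes "ab \<in> off_diag" and "cd \<in> off_diag"
  shows "integrable M (\<lambda>\<gamma>. fluct_term ab \<gamma> * fluct_term cd \<gamma>)"
  using assms fluct_term_product integrable_channel_prod[OF integrable_cross_factor]
  by (cases ab; cases cd) simp

text \<open>An off-diagonal entry is centred and independent of the diagonal, so distinct terms
  are uncorrelated.\<close>

lemma integral_fluct_term_product:
  assumes ab: "(a, b) \<in> off_diag" and cd: "(c, d) \<in> off_diag"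
  shows "(\<integral>\<gamma>. fluct_term (a, b) \<gamma> * fluct_term (c, d) \<gamma> \<partial>M) = (if (a, b) = (c, d) then p * p * \<sigma>2 else 0)"
proof -
  have "a \<noteq> b" "a < n" "b < n" using ab by (auto simp: off_diag_def)
  have "(\<integral>\<gamma>. fluct_term (a, b) \<gamma> * fluct_term (c, d) \<gamma> \<partial>M) = (\<Prod>q\<in>I. \<integral>v. cross_factor a b c d q v \<partial>P)"
    by (simp add: fluct_term_product[OF assms] integral_channel_prod integrable_cross_factor)
  also have "\<dots> = (if (a, b) = (c, d) then p * p * \<sigma>2 else 0)"
  proof (cases "(a, b) = (c, d)")
    case True
    have "(\<integral>v. cross_factor a b c d q v \<partial>P)
        = (if q = (a, a) then p else 1) * (if q = (b, b) then p else 1) * (if q = (a, b) then \<sigma>2 else 1)" for q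
      using True \<open>a \<noteq> b\<close>
      by (cases "q = (a, a)"; cases "q = (b, b)"; cases "q = (a, b)")
        (auto simp: cross_factor_def strong_ind_idem integral_P_strong_ind pareto_variance_def power2_eq_square)
    then show ?thesis using True \<open>a < n\<close> \<open>b < n\<close> by (simp add: prod.distrib)
  next
    case False
    then have "cross_factor a b c d (a, b) = (\<lambda>v. v - \<mu>)"
      using \<open>a \<noteq> b\<close> by (auto simp: cross_factor_def fun_eq_iff)
    then have "(\<integral>v. cross_factor a b c d (a, b) v \<partial>P) = 0"
      by (simp add: integral_P_centered)
    then show ?thesis using False \<open>a < n\<close> \<open>b < n\<close> by (intro trans[OF prod_zero]) auto
  qed
  finally show ?thesis .
qed

lemma fluct_square: "(fluct \<gamma>)\<^sup>2 = (\<Sum>ab\<in>off_diag. \<Sum>cd\<in>off_diag. fluct_term ab \<gamma> * fluct_term cd \<gamma>)"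
  unfolding fluct_def by (simp add: power2_eq_square sum_product)

lemma integrable_fluct_square: "integrable M (\<lambda>\<gamma>. (fluct \<gamma>)\<^sup>2)"
  unfolding fluct_square by (intro Bochner_Integration.integrable_sum integrable_fluct_term_product)

lemma integral_fluct_square_le: "(\<integral>\<gamma>. (fluct \<gamma>)\<^sup>2 \<partial>M) \<le> n * n * (p * p * \<sigma>2)"
proof -
  have "(\<integral>\<gamma>. (fluct \<gamma>)\<^sup>2 \<partial>M) = (\<Sum>ab\<in>off_diag. \<Sum>cd\<in>off_diag. \<integral>\<gamma>. fluct_term ab \<gamma> * fluct_term cd \<gamma> \<partial>M)"
    unfolding fluct_square by (simp add: integrable_fluct_term_product integrable_sum)
  also have "\<dots> = (\<Sum>ab\<in>off_diag. \<Sum>cd\<in>off_diag. if ab = cd then p * p * \<sigma>2 else 0)"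
    by (intro sum.cong refl) (auto simp: integral_fluct_term_product split: if_split_asm)
  also have "\<dots> = card off_diag * (p * p * \<sigma>2)"
    using finite_off_diag by simp
  also have "\<dots> \<le> n * n * (p * p * \<sigma>2)"
    using card_off_diag_le pareto_variance_nonneg
    by (intro mult_right_mono) (auto simp flip: of_nat_mult)
  finally show ?thesis .
qed

lemma mutual_interference_strong_pairs:
  "mutual_interference \<gamma> (strong_pairs n t \<gamma>)
     = fluct \<gamma> + \<mu> * (\<Sum>ab\<in>off_diag. is_strong (fst ab) \<gamma> * is_strong (snd ab) \<gamma>)"
proof -
  let ?D = "strong_pairs n t \<gamma>"
  have "{(k, i). k \<in> ?D \<and> i \<in> ?D \<and> k \<noteq> i} = {ab\<in>off_diag. t \<le> \<gamma> (fst ab, fst ab) \<and> t \<le> \<gamma> (snd ab, snd ab)}"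
    by (auto simp: strong_pairs_def off_diag_def)
  then have "mutual_interference \<gamma> ?D
      = (\<Sum>ab\<in>off_diag. if t \<le> \<gamma> (fst ab, fst ab) \<and> t \<le> \<gamma> (snd ab, snd ab) then \<gamma> ab else 0)"
    by (simp add: mutual_interference_eq_sum_pairs strong_pairs_def sum.inter_filter[OF finite_off_diag]
        split_beta')
  also have "\<dots> = (\<Sum>ab\<in>off_diag. fluct_term ab \<gamma> + \<mu> * (is_strong (fst ab) \<gamma> * is_strong (snd ab) \<gamma>))"
    by (intro sum.cong refl) (auto simp: fluct_term_def is_strong_iff algebra_simps)
  finally show ?thesis by (simp add: fluct_def sum.distrib sum_distrib_left)
qed

lemma mutual_interference_strong_pairs_le:
  "mutual_interference \<gamma> (strong_pairs n t \<gamma>) \<le> fluct \<gamma> + \<mu> * (num_strong \<gamma>)\<^sup>2"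
proof -
  have "(\<Sum>ab\<in>off_diag. is_strong (fst ab) \<gamma> * is_strong (snd ab) \<gamma>) \<le> (\<Sum>ab\<in>I. is_strong (fst ab) \<gamma> * is_strong (snd ab) \<gamma>)"
    by (intro sum_mono2) (auto simp: off_diag_def is_strong_iff)
  also have "\<dots> = (num_strong \<gamma>)\<^sup>2"
    unfolding num_strong_def power2_eq_square sum_product sum.cartesian_product by (simp add: split_beta)
  finally show ?thesis
    using pareto_mean_nonneg by (simp add: mutual_interference_strong_pairs mult_left_mono)
qed

lemma prob_num_strong_deviation_le:
  assumes "n * p > 0"
  shows "M.prob {\<gamma>\<in>space M. (n * p / 2)\<^sup>2 \<le> (num_strong \<gamma> - n * p)\<^sup>2} \<le> 4 / (n * p)"
proof -
  have "M.prob {\<gamma>\<in>space M. (n * p / 2)\<^sup>2 \<le> (num_strong \<gamma> - n * p)\<^sup>2}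
      \<le> (\<integral>\<gamma>. (num_strong \<gamma> - n * p)\<^sup>2 \<partial>M) / (n * p / 2)\<^sup>2"
    using assms by (intro integral_Markov_inequality_measure[OF integrable_num_strong_dev_square])
      (auto simp: zero_less_mult_iff)
  also have "\<dots> \<le> n * p / (n * p / 2)\<^sup>2"
    using integral_num_strong_dev_square_le by (intro divide_right_mono) auto
  also have "\<dots> = 4 / (n * p)" using assms by (simp add: field_simps power2_eq_square)
  finally show ?thesis .
qed

lemma prob_fluct_large_le:
  assumes "n * p > 0"
  shows "M.prob {\<gamma>\<in>space M. (n * p)^4 \<le> (fluct \<gamma>)\<^sup>2} \<le> \<sigma>2 / (n * p)\<^sup>2"
proof -
  have "M.prob {\<gamma>\<in>space M. (n * p)^4 \<le> (fluct \<gamma>)\<^sup>2} \<le> (\<integral>\<gamma>. (fluct \<gamma>)\<^sup>2 \<partial>M) / (n * p)^4"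
    using assms by (intro integral_Markov_inequality_measure[OF integrable_fluct_square])
      (auto simp: zero_less_mult_iff)
  also have "\<dots> \<le> n * n * (p * p * \<sigma>2) / (n * p)^4"
    using integral_fluct_square_le by (intro divide_right_mono) auto
  also have "\<dots> = \<sigma>2 / (n * p)\<^sup>2" using assms by (simp add: field_simps power2_eq_square power4_eq_xxxx)
  finally show ?thesis .
qed

definition good :: "(nat \<times> nat \<Rightarrow> real) set" where
  "good = {\<gamma>\<in>space M. (num_strong \<gamma> - n * p)\<^sup>2 < (n * p / 2)\<^sup>2 \<and> (fluct \<gamma>)\<^sup>2 < (n * p)^4 \<and> (\<forall>z\<in>I. \<gamma> z \<ge> 0)}"

lemma sets_good: "good \<in> sets M"
  unfolding good_def by measurable

lemma prob_good_ge:
  assumes "n * p > 0"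
  shows "1 - 4 / (n * p) - \<sigma>2 / (n * p)\<^sup>2 \<le> M.prob good"
proof -
  define A1 where "A1 = {\<gamma>\<in>space M. (n * p / 2)\<^sup>2 \<le> (num_strong \<gamma> - n * p)\<^sup>2}"
  define A2 where "A2 = {\<gamma>\<in>space M. (n * p)^4 \<le> (fluct \<gamma>)\<^sup>2}"
  define A3 where "A3 = {\<gamma>\<in>space M. \<not> (\<forall>z\<in>I. \<gamma> z \<ge> 0)}"
  have sets: "A1 \<in> sets M" "A2 \<in> sets M" "A3 \<in> sets M"
    unfolding A1_def A2_def A3_def by measurable
  have "M.prob A3 = 0"
    using AE_channel_nonneg sets(3) unfolding A3_def by (simp add: AE_iff_measurable M.emeasure_eq_measure)
  have "M.prob (space M - good) \<le> M.prob (A1 \<union> A2 \<union> A3)"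
    using sets by (intro M.finite_measure_mono) (auto simp: good_def A1_def A2_def A3_def)
  also have "\<dots> \<le> M.prob A1 + M.prob A2 + M.prob A3"
    using sets by (intro order.trans[OF measure_subadditive] add_right_mono measure_subadditive) auto
  also have "\<dots> \<le> 4 / (n * p) + \<sigma>2 / (n * p)\<^sup>2"
    using prob_num_strong_deviation_le[OF assms] prob_fluct_large_le[OF assms] \<open>M.prob A3 = 0\<close>
    unfolding A1_def A2_def by linarith
  finally show ?thesis using M.prob_compl[OF sets_good] by linarith
qed

lemma sets_throughput_ge:
  "{\<gamma>\<in>space M. \<forall>S. top_set n k \<gamma> S \<longrightarrow> c \<le> real (throughput N0 \<beta> \<gamma> S)} \<in> sets M"
proof -
  have "real (throughput N0 \<beta> \<gamma> S) = (\<Sum>i\<in>S. if succeeds N0 \<beta> \<gamma> S i then 1 else 0)"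
    if "S \<subseteq> {..<n}" for \<gamma> S
    using finite_subset[OF that] by (simp add: throughput_def sum.If_cases Int_def)
  then have "{\<gamma>\<in>space M. \<forall>S. top_set n k \<gamma> S \<longrightarrow> c \<le> real (throughput N0 \<beta> \<gamma> S)}
      = {\<gamma>\<in>space M. \<forall>S\<in>Pow {..<n}. top_set n k \<gamma> S \<longrightarrow> c \<le> (\<Sum>i\<in>S. if succeeds N0 \<beta> \<gamma> S i then 1 else 0)}"
    by (auto simp: top_set_def)
  also have "\<dots> \<in> sets M"
  proof (intro sets.sets_Collect_finite_All sets.sets_Collect_imp)
    fix S assume "S \<in> Pow {..<n}"
    then show "{\<gamma> \<in> space M. top_set n k \<gamma> S} \<in> sets M"
      unfolding top_set_def
      by (intro sets.sets_Collect_conj sets.sets_Collect_const sets.sets_Collect_finite_All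
          borel_measurable_le measurable_channel_coordinate) (auto intro: finite_subset)
    show "{\<gamma> \<in> space M. c \<le> (\<Sum>i\<in>S. if succeeds N0 \<beta> \<gamma> S i then 1 else 0)} \<in> sets M"
      unfolding succeeds_def interference_def by measurable
  qed simp
  finally show ?thesis .
qed

lemma good_num_strong_bounds:
  assumes "\<gamma> \<in> good" and "n * p > 0"
  shows "n * p / 2 < num_strong \<gamma>" and "num_strong \<gamma> < 3/2 * (n * p)"
proof -
  have "\<bar>num_strong \<gamma> - n * p\<bar>\<^sup>2 < (n * p / 2)\<^sup>2"
    using assms(1) unfolding good_def by simp
  then have "\<bar>num_strong \<gamma> - n * p\<bar> < n * p / 2"
    by (rule power2_less_imp_less) (use assms(2) in simp)
  then show "n * p / 2 < num_strong \<gamma>" and "num_strong \<gamma> < 3/2 * (n * p)"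
    by linarith+
qed

lemma good_mutual_interference_le:
  assumes "\<gamma> \<in> good" and "n * p > 0"
  shows "mutual_interference \<gamma> (strong_pairs n t \<gamma>) \<le> (1 + 9/4 * \<mu>) * (n * p)\<^sup>2"
proof -
  have "\<bar>fluct \<gamma>\<bar>\<^sup>2 < ((n * p)\<^sup>2)\<^sup>2"
    using assms(1) unfolding good_def by (simp flip: power_mult)
  then have "fluct \<gamma> \<le> (n * p)\<^sup>2"
    using power2_less_imp_less[of "\<bar>fluct \<gamma>\<bar>" "(n * p)\<^sup>2"] by simp
  moreover have "(num_strong \<gamma>)\<^sup>2 \<le> (3/2 * (n * p))\<^sup>2"
    using good_num_strong_bounds[OF assms] assms(2) by (intro power_mono) auto
  then have "\<mu> * (num_strong \<gamma>)\<^sup>2 \<le> \<mu> * (9/4 * (n * p)\<^sup>2)"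
    using pareto_mean_nonneg by (intro mult_left_mono) (auto simp: power2_eq_square)
  ultimately show ?thesis
    using mutual_interference_strong_pairs_le[of \<gamma>] by (simp add: algebra_simps)
qed

text \<open>On \<open>good\<close> the mutual interference of the strong pairs is at most \<open>(1 + 9\<mu>/4) q\<^sup>2\<close>, so at most
  \<open>q/8\<close> of them receive interference \<open>\<theta> = 8 (1 + 9\<mu>/4) q\<close> or more.\<close>

lemma good_subset_throughput_ge:
  assumes q: "n * p \<ge> 8" and "\<beta> > 0"
    and threshold: "\<beta> * (N0 + 8 * (1 + 9/4 * \<mu>) * (n * p)) \<le> t" and "c \<le> n * p / 4"
  shows "good \<subseteq> {\<gamma>\<in>space M. \<forall>S. top_set n (nat \<lfloor>n * p / 2\<rfloor>) \<gamma> S \<longrightarrow> c \<le> real (throughput N0 \<beta> \<gamma> S)}"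
proof safe
  fix \<gamma> S assume "\<gamma> \<in> good" and top: "top_set n (nat \<lfloor>n * p / 2\<rfloor>) \<gamma> S"
  let ?q = "n * p" and ?C = "1 + 9/4 * \<mu>" and ?D = "strong_pairs n t \<gamma>"
  have "?C > 0" "?q > 0" using q pareto_mean_nonneg by (auto intro: add_pos_nonneg)
  then have "mutual_interference \<gamma> ?D / (8 * ?C * ?q) \<le> ?C * ?q\<^sup>2 / (8 * ?C * ?q)"
    using good_mutual_interference_le[OF \<open>\<gamma> \<in> good\<close>] by (intro divide_right_mono) auto
  also have "\<dots> = ?q / 8"
    using \<open>?C > 0\<close> \<open>?q > 0\<close> by (simp only: power2_eq_square) (simp add: divide_simps)
  finally have "mutual_interference \<gamma> ?D / (8 * ?C * ?q) \<le> ?q / 8" .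
  moreover have "real (card S) - mutual_interference \<gamma> ?D / (8 * ?C * ?q) \<le> real (throughput N0 \<beta> \<gamma> S)"
  proof (rule throughput_ge_card_minus_mutual_interference)
    have "nat \<lfloor>?q / 2\<rfloor> \<le> card ?D"
      using good_num_strong_bounds[OF \<open>\<gamma> \<in> good\<close> \<open>?q > 0\<close>] num_strong_eq_card[of \<gamma>] by linarith
    then show "S \<subseteq> ?D" by (rule top_set_subset_strong_pairs[OF top])
    show "8 * ?C * ?q > 0" using \<open>?C > 0\<close> \<open>?q > 0\<close> by simp
  qed (use \<open>\<gamma> \<in> good\<close> assms in \<open>auto simp: good_def strong_pairs_def\<close>)
  moreover have "real (card S) \<ge> ?q / 2 - 1"
    using top q unfolding top_set_def by linarith
  ultimately show "c \<le> real (throughput N0 \<beta> \<gamma> S)"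
    using q \<open>c \<le> ?q / 4\<close> by linarith
qed (simp add: good_def)

lemma prob_throughput_ge:
  assumes "n * p \<ge> 8" and "\<beta> > 0"
    and "\<beta> * (N0 + 8 * (1 + 9/4 * \<mu>) * (n * p)) \<le> t" and "c \<le> n * p / 4"
  shows "1 - 4 / (n * p) - \<sigma>2 / (n * p)\<^sup>2
    \<le> measure M {\<gamma>\<in>space M. \<forall>S. top_set n (nat \<lfloor>n * p / 2\<rfloor>) \<gamma> S \<longrightarrow> c \<le> real (throughput N0 \<beta> \<gamma> S)}"
  using prob_good_ge M.finite_measure_mono[OF good_subset_throughput_ge[OF assms] sets_throughput_ge] assms(1)
  by fastforce

end

section \<open>Scaling the threshold with n\<close>

lemma ex_ge_one_powr_ge:
  fixes x e :: real
  assumes "e > 0"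
  shows "\<exists>L\<ge>1. x \<le> L powr e"
proof (intro exI conjI)
  let ?L = "max 1 (\<bar>x\<bar> powr (1 / e))"
  show "?L \<ge> 1" by simp
  have "x \<le> (\<bar>x\<bar> powr (1 / e)) powr e"
    using assms by (cases "x = 0") (auto simp: powr_powr)
  also have "\<dots> \<le> ?L powr e"
    using assms by (intro powr_mono2) auto
  finally show "x \<le> ?L powr e" .
qed

lemma tendsto_one_minus_inverse_at_top:
  fixes f :: "'a \<Rightarrow> real"
  assumes "filterlim f at_top F"
  shows "((\<lambda>x. 1 - a / f x - b / (f x)\<^sup>2) \<longlongrightarrow> 1) F"
proof -
  have "((\<lambda>x. 1 - a * inverse (f x) - b * (inverse (f x))\<^sup>2) \<longlongrightarrow> 1 - a * 0 - b * 0\<^sup>2) F"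
    by (intro tendsto_intros tendsto_inverse_0_at_top assms)
  then show ?thesis by (simp add: field_simps power2_eq_square)
qed

definition strong_threshold :: "real \<Rightarrow> real \<Rightarrow> nat \<Rightarrow> real" where
  "strong_threshold \<alpha> L n = L * real n powr (1 / (1 + \<alpha>))"

text \<open>This is \<open>n\<close> times the probability \<open>(1 + t) powr (-\<alpha>)\<close> that a pair is strong at the
  threshold \<open>t = strong_threshold \<alpha> L n\<close>.\<close>

definition expected_strong :: "real \<Rightarrow> real \<Rightarrow> nat \<Rightarrow> real" where
  "expected_strong \<alpha> L n = real n * (1 + strong_threshold \<alpha> L n) powr (-\<alpha>)"

lemma filterlim_expected_strong:
  assumes "\<alpha> > 0" and "L > 0"
  shows "filterlim (expected_strong \<alpha> L) at_top sequentially"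
  unfolding expected_strong_def strong_threshold_def using assms by real_asymp

lemma expected_strong_le: 
  assumes "\<alpha> \<ge> 0" and "L \<ge> 0"
  shows "expected_strong \<alpha> L n \<le> n"
proof -
  have "(1 + strong_threshold \<alpha> L n) powr \<alpha> \<ge> 1"
    using assms by (intro ge_one_powr_ge_zero) (auto simp: strong_threshold_def)
  then have "(1 + strong_threshold \<alpha> L n) powr (-\<alpha>) \<le> 1"
    by (simp add: powr_minus inverse_le_1_iff)
  then show ?thesis unfolding expected_strong_def by (simp add: mult_left_le)
qed

lemma expected_strong_bounds:
  fixes L :: real
  assumes "\<alpha> \<ge> 0" and "L \<ge> 1" and s: "real n powr (1 / (1 + \<alpha>)) \<ge> 1"
  shows "real n powr (1 / (1 + \<alpha>)) / (2 * L) powr \<alpha> \<le> expected_strong \<alpha> L n"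
    and "expected_strong \<alpha> L n \<le> real n powr (1 / (1 + \<alpha>)) / L powr \<alpha>"
proof -
  define s where "s = real n powr (1 / (1 + \<alpha>))"
  have "s \<ge> 1" using s by (simp add: s_def)
  then have "n \<noteq> 0" by (cases "n = 0") (auto simp: s_def)
  moreover have "1 / (1 + \<alpha>) + \<alpha> / (1 + \<alpha>) = 1"
    using assms(1) by (simp add: field_simps)
  ultimately have "real n = s * s powr \<alpha>"
    by (simp add: s_def powr_powr flip: powr_add)
  moreover have "(1 + L * s) powr (-\<alpha>) = 1 / (1 + L * s) powr \<alpha>"
    by (simp add: powr_minus_divide)
  ultimately have q_eq: "expected_strong \<alpha> L n = s * (s / (1 + L * s)) powr \<alpha>"
    using \<open>s \<ge> 1\<close> assms(2) by (simp add: expected_strong_def strong_threshold_def s_def powr_divide)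
  have "1 / (2 * L) \<le> s / (1 + L * s)" and "s / (1 + L * s) \<le> 1 / L"
    using \<open>s \<ge> 1\<close> assms(2) mult_mono[OF assms(2) \<open>s \<ge> 1\<close>] by (auto simp: divide_simps)
  then have "(1 / (2 * L)) powr \<alpha> \<le> (s / (1 + L * s)) powr \<alpha>" and "(s / (1 + L * s)) powr \<alpha> \<le> (1 / L) powr \<alpha>"
    using assms(1,2) \<open>s \<ge> 1\<close> by (auto intro!: powr_mono2)
  then have "s * (1 / (2 * L)) powr \<alpha> \<le> expected_strong \<alpha> L n" and "expected_strong \<alpha> L n \<le> s * (1 / L) powr \<alpha>"
    unfolding q_eq using \<open>s \<ge> 1\<close> by (intro mult_left_mono; simp)+
  then show "s / (2 * L) powr \<alpha> \<le> expected_strong \<alpha> L n" and "expected_strong \<alpha> L n \<le> s / L powr \<alpha>"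
    using assms(2) by (simp_all add: powr_divide)
qed

lemma prob_throughput_ge_at_scale:
  fixes L :: real and n :: nat
  assumes "\<alpha> > 2" and "\<beta> > 0" and "L \<ge> 1"
    and L: "16 * (1 + 9/4 * pareto_mean \<alpha>) * \<beta> \<le> L powr (1 + \<alpha>)"
    and large: "8 * (2 * L) powr \<alpha> \<le> real n powr (1 / (1 + \<alpha>))" "2 * \<beta> * N0 \<le> strong_threshold \<alpha> L n"
  shows "1 - 4 / expected_strong \<alpha> L n - pareto_variance \<alpha> / (expected_strong \<alpha> L n)\<^sup>2
    \<le> measure (channel_space \<alpha> n) {\<gamma> \<in> space (channel_space \<alpha> n).
         \<forall>S. top_set n (nat \<lfloor>expected_strong \<alpha> L n / 2\<rfloor>) \<gamma> S \<longrightarrow>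
           real (throughput N0 \<beta> \<gamma> S) \<ge> 1 / (4 * (2 * L) powr \<alpha>) * real n powr (1 / (1 + \<alpha>))}"
proof -
  define s where "s = real n powr (1 / (1 + \<alpha>))"
  let ?q = "expected_strong \<alpha> L n" and ?C = "1 + 9/4 * pareto_mean \<alpha>"
  interpret pareto_channel \<alpha> n "strong_threshold \<alpha> L n"
    using assms by unfold_locales (auto simp: strong_threshold_def)
  have q_eq: "real n * p = ?q" by (simp add: p_def expected_strong_def)
  have "(2 * L) powr \<alpha> \<ge> 1" using assms by (intro ge_one_powr_ge_zero) auto
  then have "s \<ge> 1" using large(1) by (simp add: s_def)
  have q_lower: "s / (2 * L) powr \<alpha> \<le> ?q" and q_upper: "?q \<le> s / L powr \<alpha>"
    using expected_strong_bounds[of \<alpha> L n] assms \<open>s \<ge> 1\<close> by (simp_all add: s_def)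
  have "8 \<le> s / (2 * L) powr \<alpha>"
    using large(1) \<open>(2 * L) powr \<alpha> \<ge> 1\<close> by (subst pos_le_divide_eq) (auto simp: s_def)
  then have "8 \<le> ?q" using q_lower by linarith
  have "8 * ?C * \<beta> * ?q \<le> 8 * ?C * \<beta> * (s / L powr \<alpha>)"
    using q_upper assms pareto_mean_nonneg by (intro mult_left_mono) auto
  also have "\<dots> \<le> L * s / 2"
  proof -
    have "16 * ?C * \<beta> * s \<le> L * L powr \<alpha> * s"
      using L \<open>s \<ge> 1\<close> \<open>L \<ge> 1\<close> by (intro mult_right_mono) (auto simp: powr_add)
    then show ?thesis using \<open>L \<ge> 1\<close> by (simp add: field_simps)
  qed
  finally have "\<beta> * (N0 + 8 * ?C * ?q) \<le> strong_threshold \<alpha> L n"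
    using large(2) by (simp add: strong_threshold_def s_def algebra_simps)
  moreover have "1 / (4 * (2 * L) powr \<alpha>) * s \<le> ?q / 4"
    using q_lower by simp
  ultimately show ?thesis
    using prob_throughput_ge[of \<beta> N0 "1 / (4 * (2 * L) powr \<alpha>) * s"] \<open>8 \<le> ?q\<close> \<open>\<beta> > 0\<close>
    by (simp add: q_eq s_def)
qed

lemma eventually_prob_throughput_ge:
  fixes L :: real
  assumes "\<alpha> > 2" and "\<beta> > 0" and "L \<ge> 1"
    and "16 * (1 + 9/4 * pareto_mean \<alpha>) * \<beta> \<le> L powr (1 + \<alpha>)"
  shows "\<forall>\<^sub>F n in sequentially. 1 - 4 / expected_strong \<alpha> L n - pareto_variance \<alpha> / (expected_strong \<alpha> L n)\<^sup>2
    \<le> measure (channel_space \<alpha> n) {\<gamma> \<in> space (channel_space \<alpha> n).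
         \<forall>S. top_set n (nat \<lfloor>expected_strong \<alpha> L n / 2\<rfloor>) \<gamma> S \<longrightarrow>
           real (throughput N0 \<beta> \<gamma> S) \<ge> 1 / (4 * (2 * L) powr \<alpha>) * real n powr (1 / (1 + \<alpha>))}"
proof -
  have "\<forall>\<^sub>F n in sequentially. 8 * (2 * L) powr \<alpha> \<le> real n powr (1 / (1 + \<alpha>))"
    using assms(1) by real_asymp
  moreover have "\<forall>\<^sub>F n in sequentially. 2 * \<beta> * N0 \<le> strong_threshold \<alpha> L n"
    unfolding strong_threshold_def using assms(1,3) by real_asymp
  ultimately show ?thesis
    by eventually_elim (rule prob_throughput_ge_at_scale[OF assms])
qed

theorem corollary3:
  fixes \<alpha> N0 \<beta> :: real
  assumes "\<alpha> > 2" and "N0 \<ge> 0" and "\<beta> > 0"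
  shows "\<exists>c > 0. \<exists>k :: nat \<Rightarrow> nat. (\<forall>n. k n \<le> n) \<and>
    ((\<lambda>n. measure (channel_space \<alpha> n)
        {\<gamma> \<in> space (channel_space \<alpha> n).
           \<forall>S. top_set n (k n) \<gamma> S \<longrightarrow>
             real (throughput N0 \<beta> \<gamma> S) \<ge> c * real n powr (1 / (1 + \<alpha>))})
      \<longlonglongrightarrow> 1)"
proof -
  obtain L where "L \<ge> 1" and L: "16 * (1 + 9/4 * pareto_mean \<alpha>) * \<beta> \<le> L powr (1 + \<alpha>)"
    using ex_ge_one_powr_ge[of "1 + \<alpha>"] assms(1) by auto
  let ?q = "expected_strong \<alpha> L"
  have lower_lim: "(\<lambda>n. 1 - 4 / ?q n - pareto_variance \<alpha> / (?q n)\<^sup>2) \<longlonglongrightarrow> 1"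
    using filterlim_expected_strong[of \<alpha> L] assms(1) \<open>L \<ge> 1\<close> by (intro tendsto_one_minus_inverse_at_top) auto
  have prob: "prob_space (channel_space \<alpha> n)" for n
    using assms(1) by (intro prob_space_channel_space) simp
  have "(\<lambda>n. measure (channel_space \<alpha> n)
        {\<gamma> \<in> space (channel_space \<alpha> n).
           \<forall>S. top_set n (nat \<lfloor>?q n / 2\<rfloor>) \<gamma> S \<longrightarrow>
             real (throughput N0 \<beta> \<gamma> S) \<ge> 1 / (4 * (2 * L) powr \<alpha>) * real n powr (1 / (1 + \<alpha>))})
      \<longlonglongrightarrow> 1"
    by (rule tendsto_sandwich[OF eventually_prob_throughput_ge[OF assms(1,3) \<open>L \<ge> 1\<close> L] _ lower_lim tendsto_const])
      (simp add: prob_space.prob_le_1[OF prob])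
  moreover have "nat \<lfloor>?q n / 2\<rfloor> \<le> n" for n
    using expected_strong_le[of \<alpha> L n] assms(1) \<open>L \<ge> 1\<close> by linarith
  moreover have "1 / (4 * (2 * L) powr \<alpha>) > 0" using \<open>L \<ge> 1\<close> by simp
  ultimately show ?thesis
    by (intro exI[of _ "1 / (4 * (2 * L) powr \<alpha>)"] exI[of _ "\<lambda>n. nat \<lfloor>?q n / 2\<rfloor>"] conjI allI)
qed

end
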